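(* Let $R_\bullet$ and $\omega_q,(\omega_q)_j$ be as in the context, and let $(\mu,\nu)$ be a $(p,q)$-shuffle. Then for $1\le j\le q$ one has $s_\mu(y_j)=y_{\nu_j+1}$ in $R_{p+q}$, and hence in $\Omega(R_{p+q})$ $$s_\mu(\omega_q)=\prod_{t\in\{\nu_1,\dots,\nu_q\}}{\bf d}y_{t+1},\qquad s_\mu((\omega_q)_j)=\prod_{t\in\{\nu_1,\dots,\widehat{\nu_j},\dots,\nu_q\}}{\bf d}y_{t+1}.$$
   Context: Fix $n\ge1$, $|x|\ge1$. $R_\bullet$ is the simplicial graded $\mathbb{F}_2$-algebra with $R_q=\mathbb{F}_2[x,y_1,\dots,y_q]$, $|y_i|=(n+1)|x|$, with algebra face and degeneracy maps $s_i(x)=x$, $d_i(x)=x$, $s_i(y_j)=y_j$ if $i\ge j$, $s_i(y_j)=y_{j+1}$ if $i<j$; $d_i(y_j)=x^{n+1}$ if $i=0,j=1$; $d_i(y_j)=y_{j-1}$ if $i<j,j>1$; $d_i(y_j)=y_j$ if $i\ge j,j<q$; $d_q(y_q)=0$. $\Omega$ denotes the de Rham complex functor (free $A$-algebra on ${\bf d}a$, $a\in A$, modulo additivity, Leibniz rule and $({\bf d}a)^2=0$), applied degreewise. $\omega_q={\bf d}y_1\cdots{\bf d}y_q$ and $(\omega_q)_j$ is $\omega_q$ with ${\bf d}y_j$ omitted. A $(p,q)$-shuffle $(\mu,\nu)$ consists of two increasing sequences $\mu_1<\dots<\mu_p$ and $\nu_1<\dots<\nu_q$ whose union is $\{0,1,\dots,p+q-1\}$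 (disjointly), and $s_\mu=s_{\mu_p}\cdots s_{\mu_1}:R_q\to R_{p+q}$ (extended to $\Omega$). *)

theory Defs
  imports "HOL-Library.Poly_Mapping" "HOL-Library.Z2"
begin

text \<open>Generators: the polynomial generators x, y_1, y_2, ... and their de Rham
differentials dx, dy_1, dy_2, ...  All rings in the simplicial object R are
polynomial rings over F_2 (type bit) in some of these variables; the
de Rham complex Omega(F_2[x,y_1,...,y_m]) is F_2[x,y_i,dx,dy_i] modulo
the ideal generated by the squares of the differentials (characteristic 2, so
graded commutativity is plain commutativity).\<close>

datatype var = X | Y nat | DX | DY nat

type_synonym poly = "(var \<Rightarrow>\<^sub>0 nat) \<Rightarrow>\<^sub>0 bit"

definition Var :: "var \<Rightarrow> poly" where
  "Var v = Poly_Mapping.single (Poly_Mapping.single v 1) 1"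

abbreviation dY :: "nat \<Rightarrow> poly" where
  "dY i \<equiv> Var (DY i)"

definition subst :: "(var \<Rightarrow> poly) \<Rightarrow> poly \<Rightarrow> poly" where
  "subst \<sigma> p = sum (\<lambda>mon. Poly_Mapping.single 0 (Poly_Mapping.lookup p mon) *
        prod (\<lambda>v. \<sigma> v ^ Poly_Mapping.lookup mon v) (Poly_Mapping.keys mon))
      (Poly_Mapping.keys p)"

fun svar :: "nat \<Rightarrow> var \<Rightarrow> var" where
  "svar i X = X"
| "svar i DX = DX"
| "svar i (Y j) = (if j \<le> i then Y j else Y (Suc j))"
| "svar i (DY j) = (if j \<le> i then DY j else DY (Suc j))"

definition degen :: "nat \<Rightarrow> poly \<Rightarrow> poly" where
  "degen i = subst (\<lambda>v. Var (svar i v))"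

text \<open>s_mu = s_(mu_p) o ... o s_(mu_1), for mu = [mu_1, ..., mu_p].\<close>
definition s_mu :: "nat list \<Rightarrow> poly \<Rightarrow> poly" where
  "s_mu mu = fold (\<lambda>i f. degen i \<circ> f) mu id"

definition is_shuffle :: "nat \<Rightarrow> nat \<Rightarrow> nat list \<Rightarrow> nat list \<Rightarrow> bool" where
  "is_shuffle p q mu nu \<longleftrightarrow> length mu = p \<and> length nu = q \<and>
     sorted_wrt (<) mu \<and> sorted_wrt (<) nu \<and> set mu \<inter> set nu = {} \<and>
     set mu \<union> set nu = {0..<p+q}"

definition omega :: "nat \<Rightarrow> poly" where
  "omega q = (\<Prod>i\<in>{1..q}. dY i)"

definition omega_hat :: "nat \<Rightarrow> nat \<Rightarrow> poly" where
  "omega_hat q j = (\<Prod>i\<in>{1..q} - {j}. dY i)"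

fun is_dvar :: "var \<Rightarrow> bool" where
  "is_dvar DX = True" | "is_dvar (DY _) = True" | "is_dvar _ = False"

definition dsq_ideal :: "poly set" where
  "dsq_ideal = {r. \<exists>V a. finite V \<and> (\<forall>v\<in>V. is_dvar v) \<and>
                        r = (\<Sum>v\<in>V. a v * Var v ^ 2)}"

definition omega_eq :: "poly \<Rightarrow> poly \<Rightarrow> bool" where
  "omega_eq a b \<longleftrightarrow> a - b \<in> dsq_ideal"

end

theory Submission
  imports Defs
begin

text \<open>Each degeneracy renames the variables injectively, so s_mu sends a product of distinct
variables to the product of the renamed variables, and everything reduces to index arithmetic:
s_mu sends y_k to y_(fold sidx mu k). For a (p,q)-shuffle this index is computed by induction on
p + q, removing the largest element p + q - 1. If it lies in mu, the last degeneracy fixes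
y_(nu_j + 1), which lies below it; if it is nu_q, then y_q is pushed up once by each of the
p degeneracies and ends at y_(p + q). The identities in Omega then already hold as polynomials.\<close>

lemma prod_Var_eq_single:
  assumes "finite A"
  shows "(\<Prod>v\<in>A. Var v) = Poly_Mapping.single (\<Sum>v\<in>A. Poly_Mapping.single v (1::nat)) 1"
  using assms by (induction A rule: finite_induct) (simp_all add: Var_def mult_single)

lemma subst_prod_Var:
  assumes "finite A"
  shows "subst \<sigma> (\<Prod>v\<in>A. Var v) = (\<Prod>v\<in>A. \<sigma> v)"
proof -
  define m where "m = (\<Sum>v\<in>A. Poly_Mapping.single v (1::nat))"
  have lookup_m: "Poly_Mapping.lookup m v = (if v \<in> A then 1 else 0)" for v
    using assms by (simp add: m_def lookup_sum lookup_single when_def)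
  then have "Poly_Mapping.keys m = A"
    by (auto simp: in_keys_iff split: if_splits)
  then have "subst \<sigma> (Poly_Mapping.single m 1) = (\<Prod>v\<in>A. \<sigma> v ^ Poly_Mapping.lookup m v)"
    by (simp add: subst_def)
  also have "\<dots> = (\<Prod>v\<in>A. \<sigma> v)"
    by (simp add: lookup_m)
  finally show ?thesis
    by (simp add: prod_Var_eq_single[OF assms] m_def)
qed

lemma inj_svar: "inj (svar i)"
proof (rule injI)
  fix v w
  show "svar i v = svar i w \<Longrightarrow> v = w"
    by (cases v; cases w) (auto split: if_splits)
qed

lemma inj_fold_svar: "inj (fold svar mu)"
  by (induction mu) (simp_all add: inj_svar inj_compose[unfolded comp_def])

lemma degen_prod_Var:
  assumes "finite A" "inj_on \<phi> A"
  shows "degen i (\<Prod>v\<in>A. Var (\<phi> v)) = (\<Prod>v\<in>A. Var (svar i (\<phi> v)))"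
proof -
  have "degen i (\<Prod>v\<in>A. Var (\<phi> v)) = degen i (\<Prod>v\<in>\<phi> ` A. Var v)"
    using assms(2) by (simp add: prod.reindex)
  also have "\<dots> = (\<Prod>v\<in>\<phi> ` A. Var (svar i v))"
    using assms(1) by (simp add: degen_def subst_prod_Var)
  also have "\<dots> = (\<Prod>v\<in>A. Var (svar i (\<phi> v)))"
    using assms(2) by (simp add: prod.reindex)
  finally show ?thesis .
qed

lemma s_mu_prod_Var:
  assumes "finite A" "inj_on \<phi> A"
  shows "s_mu mu (\<Prod>v\<in>A. Var (\<phi> v)) = (\<Prod>v\<in>A. Var (fold svar mu (\<phi> v)))"
proof (induction mu rule: rev_induct)
  case Nil
  show ?case by (simp add: s_mu_def)
next
  case (snoc i mu)
  have inj: "inj_on (fold svar mu \<circ> \<phi>) A"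
    using assms(2) inj_fold_svar by (rule comp_inj_on[OF _ inj_on_subset]) simp
  have "s_mu (mu @ [i]) (\<Prod>v\<in>A. Var (\<phi> v)) = degen i (s_mu mu (\<Prod>v\<in>A. Var (\<phi> v)))"
    by (simp add: s_mu_def)
  also have "\<dots> = (\<Prod>v\<in>A. Var (svar i (fold svar mu (\<phi> v))))"
    using degen_prod_Var[OF assms(1) inj] by (simp add: snoc)
  finally show ?case
    by simp
qed

definition sidx :: "nat \<Rightarrow> nat \<Rightarrow> nat" where
  "sidx i k = (if k \<le> i then k else Suc k)"

lemma fold_svar_Y: "fold svar mu (Y k) = Y (fold sidx mu k)"
  and fold_svar_DY: "fold svar mu (DY k) = DY (fold sidx mu k)"
  by (induction mu arbitrary: k) (simp_all add: sidx_def)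

lemma fold_sidx_below:
  assumes "sorted_wrt (<) ms" "\<forall>m\<in>set ms. Suc m < k + length ms"
  shows "fold sidx ms k = k + length ms"
  using assms
proof (induction ms rule: rev_induct)
  case Nil
  then show ?case by simp
next
  case (snoc m ms)
  then have "fold sidx (ms @ [m]) k = sidx m (k + length ms)"
    by (fastforce simp: sorted_wrt_append)
  also have "\<dots> = k + length (ms @ [m])"
    using snoc.prems by (simp add: sidx_def)
  finally show ?case .
qed

lemma is_shuffle_sym: "is_shuffle p q mu nu \<longleftrightarrow> is_shuffle q p nu mu"
  unfolding is_shuffle_def by (metis add.commute inf_commute sup_commute)

lemma is_shuffle_butlast:
  assumes shuffle: "is_shuffle p q mu nu" and "p + q = Suc n" "n \<in> set mu"
  obtains mu' where "mu = mu' @ [n]" "is_shuffle (p - 1) q mu' nu"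
proof -
  obtain mu' m where mu: "mu = mu' @ [m]"
    using \<open>n \<in> set mu\<close> by (cases mu rule: rev_exhaust) auto
  have below_m: "\<forall>x\<in>set mu'. x < m" and sorted': "sorted_wrt (<) mu'"
    using shuffle by (simp_all add: is_shuffle_def mu sorted_wrt_append)
  have "m < Suc n"
    using shuffle \<open>p + q = Suc n\<close> unfolding is_shuffle_def mu by auto
  moreover have "n \<le> m"
    using below_m \<open>n \<in> set mu\<close> unfolding mu by fastforce
  ultimately have "m = n"
    by simp
  have "n \<notin> set nu"
    using shuffle \<open>n \<in> set mu\<close> unfolding is_shuffle_def by blast
  then have "set mu' \<union> set nu = (set mu \<union> set nu) - {n}"
    using below_m \<open>m = n\<close> unfolding mu by auto
  also have "\<dots> = {0..<p - 1 + q}"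
    using shuffle \<open>p + q = Suc n\<close> unfolding is_shuffle_def mu by auto
  finally have "is_shuffle (p - 1) q mu' nu"
    using shuffle sorted' unfolding is_shuffle_def mu by auto
  with that show ?thesis
    by (simp add: mu \<open>m = n\<close>)
qed

lemma fold_sidx_shuffle:
  assumes "is_shuffle p q mu nu" "i < q"
  shows "fold sidx mu (Suc i) = Suc (nu ! i)"
  using assms
proof (induction "p + q" arbitrary: p q mu nu i)
  case 0
  then show ?case by simp
next
  case (Suc n)
  have len_mu: "length mu = p" and len_nu: "length nu = q"
    and disjoint: "set mu \<inter> set nu = {}" and cover: "set mu \<union> set nu = {0..<Suc n}"
    using Suc.prems(1) Suc.hyps(2) by (simp_all add: is_shuffle_def)
  then have "set mu \<subseteq> {0..<Suc n}" "set nu \<subseteq> {0..<Suc n}"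
    by auto
  have "n \<in> set mu \<union> set nu"
    using cover by simp
  then consider "n \<in> set mu" | "n \<in> set nu"
    by blast
  then show ?case
  proof cases
    case 1
    then obtain mu' where mu: "mu = mu' @ [n]" and shuffle': "is_shuffle (p - 1) q mu' nu"
      using is_shuffle_butlast[OF Suc.prems(1) Suc.hyps(2)[symmetric]] by blast
    have "p - 1 + q = n"
      using len_mu Suc.hyps(2) by (simp add: mu)
    have "nu ! i \<in> set nu"
      using len_nu Suc.prems(2) by simp
    then have "nu ! i \<noteq> n" "nu ! i < Suc n"
      using disjoint 1 \<open>set nu \<subseteq> {0..<Suc n}\<close> by auto
    then have "sidx n (Suc (nu ! i)) = Suc (nu ! i)"
      by (simp add: sidx_def)
    with Suc.hyps(1)[OF \<open>p - 1 + q = n\<close>[symmetric] shuffle' Suc.prems(2)] show ?thesis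
      by (simp add: mu)
  next
    case 2
    have "is_shuffle q p nu mu" "q + p = Suc n"
      using Suc.prems(1) Suc.hyps(2) by (simp_all add: is_shuffle_sym)
    then obtain nu' where nu: "nu = nu' @ [n]" and "is_shuffle (q - 1) p nu' mu"
      using is_shuffle_butlast 2 by blast
    then have shuffle': "is_shuffle p (q - 1) mu nu'"
      by (simp add: is_shuffle_sym)
    have "p + (q - 1) = n"
      using len_nu Suc.hyps(2) by (simp add: nu)
    show ?thesis
    proof (cases "i < q - 1")
      case True
      then have "i < length nu'"
        using len_nu by (simp add: nu)
      with True show ?thesis
        using Suc.hyps(1)[OF \<open>p + (q - 1) = n\<close>[symmetric] shuffle' True]
        by (simp add: nu nth_append)
    next
      case False
      then have "i = length nu'" "Suc i + length mu = Suc n"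
        using len_mu len_nu Suc.prems(2) Suc.hyps(2) by (simp_all add: nu)
      have "\<forall>m\<in>set mu. m < n"
      proof
        fix m
        assume "m \<in> set mu"
        then have "m \<noteq> n" "m < Suc n"
          using disjoint 2 \<open>set mu \<subseteq> {0..<Suc n}\<close> by auto
        then show "m < n"
          by simp
      qed
      then have "fold sidx mu (Suc i) = Suc n"
        using fold_sidx_below[of mu "Suc i"] Suc.prems(1) \<open>Suc i + length mu = Suc n\<close>
        by (simp add: is_shuffle_def)
      then show ?thesis
        by (simp add: nu \<open>i = length nu'\<close>)
    qed
  qed
qed

corollary fold_sidx_shuffle_pred:
  assumes "is_shuffle p q mu nu" "j \<in> {1..q}"
  shows "fold sidx mu j = nu ! (j - 1) + 1"
  using fold_sidx_shuffle[OF assms(1), of "j - 1"] assms(2) by (cases j) auto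

lemma s_mu_Var: "s_mu mu (Var v) = Var (fold svar mu v)"
  using s_mu_prod_Var[of "{v}" id mu] by simp

lemma bij_betw_nth_pred:
  assumes "distinct xs"
  shows "bij_betw (\<lambda>j. xs ! (j - 1)) {1..length xs} (set xs)"
proof -
  have "bij_betw (\<lambda>j. j - 1) {1..length xs} {..<length xs}"
    by (rule bij_betw_byWitness[where f' = Suc]) auto
  then show ?thesis
    using bij_betw_trans[OF _ bij_betw_nth[OF assms refl refl]] by (simp add: comp_def)
qed

lemma bij_betw_shuffle_nth:
  assumes "is_shuffle p q mu nu"
  shows "bij_betw (\<lambda>j. nu ! (j - 1)) {1..q} (set nu)"
  using assms bij_betw_nth_pred[of nu] by (simp add: is_shuffle_def strict_sorted_iff)

lemma s_mu_prod_dY_shuffle: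
  assumes shuffle: "is_shuffle p q mu nu" and "B \<subseteq> {1..q}"
  shows "s_mu mu (\<Prod>j\<in>B. dY j) = (\<Prod>t\<in>(\<lambda>j. nu ! (j - 1)) ` B. dY (t + 1))"
proof -
  have "finite B"
    using \<open>B \<subseteq> {1..q}\<close> finite_subset by blast
  have "inj_on (\<lambda>j. nu ! (j - 1)) B"
    using bij_betw_imp_inj_on[OF bij_betw_shuffle_nth[OF shuffle]] \<open>B \<subseteq> {1..q}\<close>
    by (rule inj_on_subset)
  have "inj_on DY B"
    by (simp add: inj_on_def)
  then have "s_mu mu (\<Prod>j\<in>B. dY j) = (\<Prod>j\<in>B. dY (fold sidx mu j))"
    using s_mu_prod_Var[OF \<open>finite B\<close>] by (simp add: fold_svar_DY)
  also have "\<dots> = (\<Prod>j\<in>B. dY (nu ! (j - 1) + 1))"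
    using fold_sidx_shuffle_pred[OF shuffle] \<open>B \<subseteq> {1..q}\<close> by (intro prod.cong) auto
  also have "\<dots> = (\<Prod>t\<in>(\<lambda>j. nu ! (j - 1)) ` B. dY (t + 1))"
    using \<open>inj_on (\<lambda>j. nu ! (j - 1)) B\<close> by (simp add: prod.reindex)
  finally show ?thesis .
qed

lemma omega_eq_refl: "omega_eq a a"
  unfolding omega_eq_def dsq_ideal_def by (auto intro: exI[of _ "{}"])

theorem lemma2p4:
  fixes p q :: nat and mu nu :: "nat list"
  assumes "is_shuffle p q mu nu"
  shows "(\<forall>j\<in>{1..q}. s_mu mu (Var (Y j)) = Var (Y (nu ! (j - 1) + 1)))
       \<and> omega_eq (s_mu mu (omega q)) (\<Prod>t\<in>set nu. dY (t + 1))
       \<and> (\<forall>j\<in>{1..q}. omega_eq (s_mu mu (omega_hat q j))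
                               (\<Prod>t\<in>set nu - {nu ! (j - 1)}. dY (t + 1)))"
proof -
  let ?f = "\<lambda>j. nu ! (j - 1)"
  note bij = bij_betw_shuffle_nth[OF assms]
  have "s_mu mu (Var (Y j)) = Var (Y (nu ! (j - 1) + 1))" if "j \<in> {1..q}" for j
    using fold_sidx_shuffle_pred[OF assms that] by (simp add: s_mu_Var fold_svar_Y)
  moreover have image: "?f ` {1..q} = set nu"
    using bij by (rule bij_betw_imp_surj_on)
  moreover have "?f ` ({1..q} - {j}) = set nu - {nu ! (j - 1)}" if "j \<in> {1..q}" for j
    using inj_on_image_set_diff[OF bij_betw_imp_inj_on[OF bij], of "{1..q}" "{j}"] that image
    by auto
  ultimately show ?thesis
    by (simp add: omega_def omega_hat_def s_mu_prod_dY_shuffle[OF assms] omega_eq_refl)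
qed

end
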